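(* Let $T$ be a rank-one transformation with cut sequence $(r_n)$ and spacer sequence $(s_{n,i})$, and suppose there is a constant $c\ge0$ such that for all sufficiently large $n$, $s_{n,i}=c$ for all $0\le i<r_n$ and $s_{n,r_n}=0$. Then $T$ is an odometer.
   Context: Rank-one transformations: given a cut sequence $(r_n)_{n\ge1}$ of positive integers and a spacer sequence $(s_{n,i})_{n\ge1,0\le i\le r_n}$ of nonnegative integers, the rank-one transformation is built by cutting and stacking: $C_1=[0,1)$ is a column of height $1$; $C_{n+1}$ is obtained by cutting $C_n$ (levels $I_{n,0},\dots,I_{n,h_n-1}$, with $T$ mapping each level affinely onto the next) into $r_n+1$ equal-width subcolumns, adding $s_{n,i}$ spacer intervals atop subcolumn $i$ ($i=0$ leftmost), and stacking each subcolumn on top of the previous one; $T$ is the limit map. $T$ is an odometer if the same transformation (up to measure-theoretic isomorphism) can be obtained by a cutting-and-stacking construction (possibly starting from a different initial column) whose spacers satisfy, for some $N$, $s_{n,i}=0$ for all $n\ge N$ and $0\le i<r_n$. *)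

theory Defs
  imports "HOL-Analysis.Analysis"
begin

text \<open>A column is represented as a triple (as, w, L): the list of left endpoints of
  its levels (bottom to top), the common width w of the levels (level j is the
  interval [as!j, as!j + w)), and the total length L of [0, L) already used
  (new spacer intervals are placed to the right of L).\<close>

type_synonym column = "real list \<times> real \<times> real"

definition cs_init :: "nat \<Rightarrow> real \<Rightarrow> column" where
  "cs_init h0 w0 = (map (\<lambda>j. real j * w0) [0..<h0], w0, real h0 * w0)"

text \<open>One cutting-and-stacking step with cut number rr and spacer numbers ss i
  (i = 0..rr): cut into rr+1 subcolumns of width w/(rr+1) (subcolumn 0 leftmost),
  put ss i new spacer intervals on top of subcolumn i, and stack subcolumn i+1
  on top of subcolumn i.\<close>
definition cs_step :: "nat \<Rightarrow> (nat \<Rightarrow> nat) \<Rightarrow> column \<Rightarrow> column" where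
  "cs_step rr ss C = (case C of (as, w, L) \<Rightarrow>
     let w' = w / real (rr + 1) in
     (concat (map (\<lambda>i. map (\<lambda>a. a + real i * w') as @
                        map (\<lambda>k. L + real ((\<Sum>i'<i. ss i') + k) * w') [0..<ss i])
                  [0..<Suc rr]),
      w', L + real (\<Sum>i\<le>rr. ss i) * w'))"

text \<open>cs_col h0 w0 r s m is the column C_(m+1); C_1 is the initial column and
  C_(n+1) is obtained from C_n using r n and s n.\<close>
fun cs_col :: "nat \<Rightarrow> real \<Rightarrow> (nat \<Rightarrow> nat) \<Rightarrow> (nat \<Rightarrow> nat \<Rightarrow> nat) \<Rightarrow> nat \<Rightarrow> column" where
  "cs_col h0 w0 r s 0 = cs_init h0 w0"
| "cs_col h0 w0 r s (Suc m) = cs_step (r (Suc m)) (s (Suc m)) (cs_col h0 w0 r s m)"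

definition cs_lefts :: "nat \<Rightarrow> real \<Rightarrow> (nat \<Rightarrow> nat) \<Rightarrow> (nat \<Rightarrow> nat \<Rightarrow> nat) \<Rightarrow> nat \<Rightarrow> real list" where
  "cs_lefts h0 w0 r s m = fst (cs_col h0 w0 r s m)"

definition cs_width :: "nat \<Rightarrow> real \<Rightarrow> (nat \<Rightarrow> nat) \<Rightarrow> (nat \<Rightarrow> nat \<Rightarrow> nat) \<Rightarrow> nat \<Rightarrow> real" where
  "cs_width h0 w0 r s m = fst (snd (cs_col h0 w0 r s m))"

definition cs_level :: "nat \<Rightarrow> real \<Rightarrow> (nat \<Rightarrow> nat) \<Rightarrow> (nat \<Rightarrow> nat \<Rightarrow> nat) \<Rightarrow> nat \<Rightarrow> nat \<Rightarrow> real set" where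
  "cs_level h0 w0 r s m j =
     {cs_lefts h0 w0 r s m ! j ..< cs_lefts h0 w0 r s m ! j + cs_width h0 w0 r s m}"

definition cs_space :: "nat \<Rightarrow> real \<Rightarrow> (nat \<Rightarrow> nat) \<Rightarrow> (nat \<Rightarrow> nat \<Rightarrow> nat) \<Rightarrow> real set" where
  "cs_space h0 w0 r s = (\<Union>m. \<Union>j<length (cs_lefts h0 w0 r s m). cs_level h0 w0 r s m j)"

definition cs_measure :: "nat \<Rightarrow> real \<Rightarrow> (nat \<Rightarrow> nat) \<Rightarrow> (nat \<Rightarrow> nat \<Rightarrow> nat) \<Rightarrow> real measure" where
  "cs_measure h0 w0 r s = restrict_space lborel (cs_space h0 w0 r s)"

text \<open>The limit map: on a non-top level j of some column it is the translation
  mapping level j onto level j+1 (independent of the column chosen); elsewhere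
  (a null set) it is set to the identity.\<close>
definition cs_map :: "nat \<Rightarrow> real \<Rightarrow> (nat \<Rightarrow> nat) \<Rightarrow> (nat \<Rightarrow> nat \<Rightarrow> nat) \<Rightarrow> real \<Rightarrow> real" where
  "cs_map h0 w0 r s x =
     (if \<exists>m j. Suc j < length (cs_lefts h0 w0 r s m) \<and> x \<in> cs_level h0 w0 r s m j then
        (let m = (LEAST m. \<exists>j. Suc j < length (cs_lefts h0 w0 r s m) \<and> x \<in> cs_level h0 w0 r s m j);
             j = (THE j. Suc j < length (cs_lefts h0 w0 r s m) \<and> x \<in> cs_level h0 w0 r s m j)
         in x - cs_lefts h0 w0 r s m ! j + cs_lefts h0 w0 r s m ! Suc j)
      else x)"

text \<open>The rank-one transformation with cut sequence r and spacer sequence s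
  (indices n \<ge> 1, 0 \<le> i \<le> r n), starting from C_1 = [0,1).\<close>
definition rank_one_measure :: "(nat \<Rightarrow> nat) \<Rightarrow> (nat \<Rightarrow> nat \<Rightarrow> nat) \<Rightarrow> real measure" where
  "rank_one_measure r s = cs_measure 1 1 r s"

definition rank_one_map :: "(nat \<Rightarrow> nat) \<Rightarrow> (nat \<Rightarrow> nat \<Rightarrow> nat) \<Rightarrow> real \<Rightarrow> real" where
  "rank_one_map r s = cs_map 1 1 r s"

text \<open>Measure-theoretic isomorphism (in the sense of Walters): invariant conull
  sets and a bimeasurable, measure-preserving bijection between them conjugating
  the maps.\<close>
definition mp_isomorphic :: "'a measure \<Rightarrow> ('a \<Rightarrow> 'a) \<Rightarrow> 'b measure \<Rightarrow> ('b \<Rightarrow> 'b) \<Rightarrow> bool" where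
  "mp_isomorphic M T N S \<longleftrightarrow>
     (\<exists>X0 Y0 \<phi>. X0 \<in> sets M \<and> Y0 \<in> sets N \<and>
        emeasure M (space M - X0) = 0 \<and> emeasure N (space N - Y0) = 0 \<and>
        T ` X0 \<subseteq> X0 \<and> S ` Y0 \<subseteq> Y0 \<and>
        bij_betw \<phi> X0 Y0 \<and>
        \<phi> \<in> measurable (restrict_space M X0) (restrict_space N Y0) \<and>
        the_inv_into X0 \<phi> \<in> measurable (restrict_space N Y0) (restrict_space M X0) \<and>
        (\<forall>A \<in> sets N. A \<subseteq> Y0 \<longrightarrow> emeasure M (\<phi> -` A \<inter> X0) = emeasure N A) \<and>
        (\<forall>x \<in> X0. \<phi> (T x) = S (\<phi> x)))"

text \<open>Odometer: isomorphic to a cutting-and-stacking transformation (from an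
  arbitrary initial column of height h0 \<ge> 1 and width w0 > 0) whose spacers
  s' n i vanish for all n \<ge> N and i < r' n.\<close>
definition is_odometer :: "'a measure \<Rightarrow> ('a \<Rightarrow> 'a) \<Rightarrow> bool" where
  "is_odometer M T \<longleftrightarrow>
     (\<exists>h0 w0 r' s' N. h0 \<ge> 1 \<and> w0 > 0 \<and> (\<forall>n\<ge>1. r' n \<ge> 1) \<and>
        (\<forall>n\<ge>N. \<forall>i<r' n. s' n i = 0) \<and>
        mp_isomorphic M T (cs_measure h0 w0 r' s') (cs_map h0 w0 r' s'))"

end

theory Submission
  imports Defs
begin

(* Put c spacers on top of the column C_(M+1) to get a column D_0 and build the spacer-free
   tower D_(k+1) from D_k. Cutting D_k into r+1 copies and stacking them reproduces
   C_(M+k+2) with c spacers on top: the c spacers atop each copy are exactly those the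
   rank-one construction inserts between its subcolumns. Hence D_k is C_(M+k+1) plus c
   spacers, and the translations carrying level j of C_(M+k+1) onto level j of D_k agree
   wherever they overlap. They glue to a countable piecewise translation phi, which is
   therefore measure preserving and conjugates T to the odometer built on D_0. Both systems
   live on [0, L) for the length L of D_0, because D_k exceeds C_(M+k+1) only by c levels
   whose width tends to 0. Since widths tend to 0, at most one point lies in no non-top
   level, so discarding the countably many points whose orbit meets a top level costs
   nothing. *)

lemma translate_borel:
  fixes B :: "real set"
  assumes "B \<in> sets borel"
  shows "(\<lambda>x. x + t) ` B \<in> sets borel"
proof -
  have "(\<lambda>x. x + t) ` B = (\<lambda>x. x - t) -` B \<inter> space borel"
    by (auto simp: image_iff) (metis diff_add_cancel)
  then show ?thesis
    using measurable_sets[of "\<lambda>x::real. x - t" borel borel B] assms by simp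
qed

lemma emeasure_lborel_translate:
  fixes B :: "real set"
  assumes B: "B \<in> sets borel"
  shows "emeasure lborel ((\<lambda>x. x + t) ` B) = emeasure lborel B"
proof -
  have "emeasure lborel ((\<lambda>x. x + t) ` B) = emeasure (distr lborel borel ((+) t)) ((\<lambda>x. x + t) ` B)"
    by (simp only: lborel_distr_plus)
  also have "\<dots> = emeasure lborel ((+) t -` ((\<lambda>x. x + t) ` B) \<inter> space lborel)"
    by (rule emeasure_distr) (simp_all add: translate_borel[OF B])
  also have "(+) t -` ((\<lambda>x. x + t) ` B) \<inter> space lborel = B"
    by (auto simp: add.commute)
  finally show ?thesis .
qed

lemma countable_disjoint_refinement:
  fixes P :: "'i::countable \<Rightarrow> 'a set"
  assumes "\<And>i. P i \<in> sets M"
  obtains Q where "\<And>i. Q i \<in> sets M" "\<And>i. Q i \<subseteq> P i" "disjoint_family Q"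
    "(\<Union>i. Q i) = (\<Union>i. P i)"
proof
  define Q where "Q i = P i - (\<Union>j\<in>{j. to_nat j < to_nat i}. P j)" for i
  show "Q i \<in> sets M" for i
    unfolding Q_def using assms by (intro sets.Diff sets.countable_UN') auto
  show "Q i \<subseteq> P i" for i
    unfolding Q_def by blast
  show "disjoint_family Q"
    unfolding disjoint_family_on_def
  proof (intro ballI impI)
    fix i j :: 'i
    assume "i \<noteq> j"
    then have "to_nat i < to_nat j \<or> to_nat j < to_nat i"
      by (metis linorder_neqE_nat to_nat_split)
    then show "Q i \<inter> Q j = {}"
      unfolding Q_def by blast
  qed
  show "(\<Union>i. Q i) = (\<Union>i. P i)"
  proof
    show "(\<Union>i. P i) \<subseteq> (\<Union>i. Q i)"
    proof
      fix x assume "x \<in> (\<Union>i. P i)"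
      then obtain i where "x \<in> P i" by blast
      then obtain j where "x \<in> P j" "\<forall>j'. x \<in> P j' \<longrightarrow> to_nat j \<le> to_nat j'"
        using ex_has_least_nat[of "\<lambda>j. x \<in> P j" i to_nat] by blast
      then have "x \<in> Q j"
        unfolding Q_def by force
      then show "x \<in> (\<Union>i. Q i)" by blast
    qed
  qed (auto simp: Q_def)
qed

lemma emeasure_piecewise_translation:
  fixes Q :: "'i::countable \<Rightarrow> real set"
  assumes Q: "\<And>i. Q i \<in> sets borel" "disjoint_family Q"
    and f: "\<forall>i. \<forall>x\<in>Q i. f x = x + t i" "inj_on f (\<Union>i. Q i)"
    and A: "A \<in> sets borel"
  shows "emeasure lborel (f -` A \<inter> (\<Union>i. Q i)) = emeasure lborel (A \<inter> f ` (\<Union>i. Q i))"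
proof -
  define U where "U i = Q i \<inter> (\<lambda>x. x + t i) -` A" for i
  define V where "V i = (\<lambda>x. x + t i) ` U i" for i
  have U_borel: "U i \<in> sets borel" for i
    unfolding U_def using Q(1) A by measurable
  have V_borel: "V i \<in> sets borel" for i
    unfolding V_def using U_borel by (rule translate_borel)
  have "disjoint_family U"
    using Q(2) unfolding disjoint_family_on_def U_def by blast
  moreover have "disjoint_family V"
    unfolding disjoint_family_on_def
  proof (intro ballI impI)
    fix i j :: 'i
    assume "i \<noteq> j"
    show "V i \<inter> V j = {}"
    proof (rule ccontr)
      assume "V i \<inter> V j \<noteq> {}"
      then obtain x y where "x \<in> Q i" "y \<in> Q j" "x + t i = y + t j"
        unfolding V_def U_def by auto
      moreover from this have "f x = f y"
        using f(1) by simp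
      ultimately have "x = y" "x \<in> Q i" "y \<in> Q j"
        using f(2) by (auto dest: inj_onD)
      then show False
        using Q(2) \<open>i \<noteq> j\<close> unfolding disjoint_family_on_def by auto
    qed
  qed
  ultimately have "emeasure lborel (\<Union>i. U i) = emeasure lborel (\<Union>i. V i)"
    using emeasure_UN_countable[of UNIV U lborel] emeasure_UN_countable[of UNIV V lborel]
      U_borel V_borel emeasure_lborel_translate[OF U_borel]
    by (simp add: V_def)
  moreover have "f -` A \<inter> (\<Union>i. Q i) = (\<Union>i. U i)"
    unfolding U_def using f(1) by auto
  moreover have "A \<inter> f ` (\<Union>i. Q i) = (\<Union>i. V i)"
    unfolding V_def U_def using f(1) by (auto simp: image_iff) blast
  ultimately show ?thesis by simp
qed

lemma piecewise_translation_image_borel: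
  fixes Q :: "'i::countable \<Rightarrow> real set"
  assumes "\<And>i. Q i \<in> sets borel" "\<forall>i. \<forall>x\<in>Q i. f x = x + t i"
  shows "f ` (\<Union>i. Q i) \<in> sets borel"
proof -
  have "f ` (\<Union>i. Q i) = (\<Union>i. (\<lambda>x. x + t i) ` Q i)"
    using assms(2) by (auto simp: image_iff) blast
  then show ?thesis
    using translate_borel[OF assms(1)] by auto
qed

lemma piecewise_translation_measurable:
  fixes Q :: "'i::countable \<Rightarrow> real set"
  assumes Q: "\<And>i. Q i \<in> sets borel" "(\<Union>i. Q i) = \<Omega>"
    and f: "\<forall>i. \<forall>x\<in>Q i. f x = x + t i"
  shows "f \<in> borel_measurable (restrict_space lborel \<Omega>)"
proof (rule measurable_piecewise_restrict[of "range Q"])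
  show "countable (range Q)" by simp
  show "space (restrict_space lborel \<Omega>) \<subseteq> \<Union> (range Q)"
    using Q(2) by (simp add: space_restrict_space)
  show "X \<inter> space (restrict_space lborel \<Omega>) \<in> sets (restrict_space lborel \<Omega>)" if "X \<in> range Q" for X
  proof -
    obtain i where X: "X = Q i"
      using \<open>X \<in> range Q\<close> by auto
    have "Q i \<subseteq> \<Omega>"
      using Q(2) by blast
    then have "Q i = \<Omega> \<inter> Q i" by blast
    then have "Q i \<in> sets (restrict_space lborel \<Omega>)"
      using Q(1)[of i] unfolding sets_restrict_space by auto
    then show ?thesis
      using \<open>Q i \<subseteq> \<Omega>\<close> X by (simp add: Int_absorb2)
  qed
  show "f \<in> borel_measurable (restrict_space (restrict_space lborel \<Omega>) X)" if "X \<in> range Q" for X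
  proof -
    obtain i where X: "X = Q i"
      using \<open>X \<in> range Q\<close> by auto
    have "(\<lambda>x. x + t i) \<in> borel_measurable (restrict_space (restrict_space lborel \<Omega>) X)"
      by (intro measurable_restrict_space1) simp
    then show ?thesis
      by (rule measurable_cong[THEN iffD1, rotated]) (use f X in \<open>auto simp: space_restrict_space\<close>)
  qed
qed

lemma piecewise_translation_bimeasurable:
  fixes P :: "'i::countable \<Rightarrow> real set"
  assumes D: "D \<in> sets borel" "D \<subseteq> (\<Union>i. P i)"
    and P: "\<And>i. P i \<in> sets borel"
    and f: "\<forall>i. \<forall>x\<in>P i. f x = x + t i" "inj_on f D"
  shows "f ` D \<in> sets borel"
    and "f \<in> borel_measurable (restrict_space lborel D)"
    and "the_inv_into D f \<in> borel_measurable (restrict_space lborel (f ` D))"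
    and "\<And>A. A \<in> sets borel \<Longrightarrow> emeasure lborel (f -` A \<inter> D) = emeasure lborel (A \<inter> f ` D)"
proof -
  obtain Q where Q: "\<And>i. Q i \<in> sets borel" "\<And>i. Q i \<subseteq> D \<inter> P i" "disjoint_family Q"
      "(\<Union>i. Q i) = (\<Union>i. D \<inter> P i)"
    by (rule countable_disjoint_refinement[of "\<lambda>i. D \<inter> P i" borel]) (use D(1) P in auto)
  have Q_D: "(\<Union>i. Q i) = D"
    unfolding Q(4) using D(2) by auto
  have f_Q: "\<forall>i. \<forall>x\<in>Q i. f x = x + t i"
    using Q(2) f(1) by blast
  show "f ` D \<in> sets borel"
    using piecewise_translation_image_borel[OF Q(1) f_Q] unfolding Q_D .
  show "f \<in> borel_measurable (restrict_space lborel D)"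
    by (rule piecewise_translation_measurable[OF Q(1) Q_D f_Q])
  show "emeasure lborel (f -` A \<inter> D) = emeasure lborel (A \<inter> f ` D)" if "A \<in> sets borel" for A
    using emeasure_piecewise_translation[OF Q(1,3) f_Q _ that] f(2) unfolding Q_D by blast
  show "the_inv_into D f \<in> borel_measurable (restrict_space lborel (f ` D))"
  proof (rule piecewise_translation_measurable[where Q="\<lambda>i. f ` Q i" and t="\<lambda>i. - t i"])
    show "f ` Q i \<in> sets borel" for i
      using piecewise_translation_image_borel[of "\<lambda>_::unit. Q i" f "\<lambda>_. t i"] Q(1) f_Q by auto
    show "(\<Union>i. f ` Q i) = f ` D"
      unfolding Q_D[symmetric] by blast
    show "\<forall>i. \<forall>y\<in>f ` Q i. the_inv_into D f y = y + - t i"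
    proof (intro allI ballI)
      fix i y
      assume y: "y \<in> f ` Q i"
      obtain x where x: "x \<in> Q i" "y = f x"
        using y by blast
      moreover have "x \<in> D"
        using x(1) Q_D by blast
      ultimately have "the_inv_into D f y = x"
        using f(2) by (simp add: the_inv_into_f_f)
      then show "the_inv_into D f y = y + - t i"
        using x f_Q by simp
    qed
  qed
qed

lemma mp_isomorphic_piecewise_translation:
  fixes P :: "'i::countable \<Rightarrow> real set"
  assumes \<Omega>: "\<Omega> \<in> sets borel" "emeasure lborel \<Omega> \<noteq> \<infinity>"
    and X0: "X0 \<subseteq> \<Omega>" "countable (\<Omega> - X0)" "X0 \<subseteq> (\<Union>i. P i)"
    and P: "\<And>i. P i \<in> sets borel"
    and f: "\<forall>i. \<forall>x\<in>P i. f x = x + t i" "inj_on f X0" "f ` X0 \<subseteq> \<Omega>"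
    and T: "T ` X0 \<subseteq> X0"
    and conj: "\<And>x. x \<in> X0 \<Longrightarrow> f (T x) = S (f x)"
  shows "mp_isomorphic (restrict_space lborel \<Omega>) T (restrict_space lborel \<Omega>) S"
proof -
  let ?M = "restrict_space lborel \<Omega>"
  define Y0 where "Y0 = f ` X0"
  have X0_null: "\<Omega> - X0 \<in> null_sets lborel"
    using X0(2) by (rule countable_imp_null_set_lborel)
  have X0_borel: "X0 \<in> sets borel"
  proof -
    have "\<Omega> - X0 \<in> sets borel"
      using null_setsD2[OF X0_null] by simp
    then have "\<Omega> - (\<Omega> - X0) \<in> sets borel"
      using \<Omega>(1) by auto
    moreover have "\<Omega> - (\<Omega> - X0) = X0"
      using X0(1) by blast
    ultimately show ?thesis by simp
  qed
  note iso = piecewise_translation_bimeasurable[OF X0_borel X0(3) P f(1,2), folded Y0_def]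
  have Y0: "Y0 \<subseteq> \<Omega>" "S ` Y0 \<subseteq> Y0"
    using f(3) T conj unfolding Y0_def by (auto simp flip: conj)
  have "f -` Y0 \<inter> X0 = X0"
    unfolding Y0_def by blast
  then have "emeasure lborel Y0 = emeasure lborel X0"
    using iso(4)[OF iso(1)] Y0_def by (simp add: Int_absorb1)
  also have "\<dots> = emeasure lborel \<Omega>"
    using emeasure_Diff_null_set[OF X0_null, of \<Omega>] \<Omega>(1) X0(1) by (simp add: Diff_Diff_Int Int_absorb1)
  finally have Y0_null: "emeasure lborel (\<Omega> - Y0) = 0"
    using emeasure_Diff[where M=lborel and A=\<Omega> and B=Y0] \<Omega> iso(1) Y0(1) by simp
  have sets_M: "B \<in> sets ?M \<longleftrightarrow> B \<subseteq> \<Omega> \<and> B \<in> sets borel" for B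
    using sets_restrict_space_iff[of \<Omega> lborel B] \<Omega>(1) by auto
  have emeasure_M: "emeasure ?M B = emeasure lborel B" if "B \<subseteq> \<Omega>" for B
    using emeasure_restrict_space[of \<Omega> lborel B] \<Omega>(1) that by simp
  have restrict_M: "restrict_space ?M B = restrict_space lborel B" if "B \<in> sets borel" "B \<subseteq> \<Omega>" for B
    using restrict_restrict_space[of \<Omega> lborel B] \<Omega>(1) that by (simp add: Int_absorb1)
  have f_meas: "f \<in> measurable (restrict_space ?M X0) (restrict_space ?M Y0)"
    unfolding restrict_M[OF X0_borel X0(1)] restrict_M[OF iso(1) Y0(1)]
  proof (rule measurable_restrict_space2)
    show "f \<in> space (restrict_space lborel X0) \<rightarrow> Y0"
      unfolding Y0_def by (auto simp: space_restrict_space)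
    show "f \<in> measurable (restrict_space lborel X0) lborel"
      using iso(2) by simp
  qed
  have inv_meas: "the_inv_into X0 f \<in> measurable (restrict_space ?M Y0) (restrict_space ?M X0)"
    unfolding restrict_M[OF X0_borel X0(1)] restrict_M[OF iso(1) Y0(1)]
  proof (rule measurable_restrict_space2)
    show "the_inv_into X0 f \<in> space (restrict_space lborel Y0) \<rightarrow> X0"
      unfolding Y0_def using the_inv_into_into[OF f(2)] by (auto simp: space_restrict_space)
    show "the_inv_into X0 f \<in> measurable (restrict_space lborel Y0) lborel"
      using iso(3) by simp
  qed
  have preserving: "emeasure ?M (f -` A \<inter> X0) = emeasure ?M A" if "A \<in> sets ?M" "A \<subseteq> Y0" for A
  proof -
    have "f -` A \<inter> X0 \<subseteq> \<Omega>" "A \<subseteq> \<Omega>" "A \<in> sets borel"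
      using that X0(1) Y0(1) sets_M by auto
    then show ?thesis
      using iso(4)[where A=A] that(2) by (simp add: emeasure_M Int_absorb2)
  qed
  have bij: "bij_betw f X0 Y0"
    unfolding Y0_def using f(2) by (rule inj_on_imp_bij_betw)
  have conull: "emeasure ?M (space ?M - X0) = 0" "emeasure ?M (space ?M - Y0) = 0"
    using \<Omega>(1) X0_null Y0_null by (simp_all add: emeasure_M null_setsD1)
  show ?thesis
    unfolding mp_isomorphic_def
    by (rule exI[where x=X0], rule exI[where x=Y0], rule exI[where x=f])
      (use X0(1) X0_borel Y0 iso(1) T conj f_meas inv_meas preserving bij conull in \<open>simp add: sets_M\<close>)
qed

(* Column m (the column C_(m+1) of the construction) has width cut_width w0 r m, and its
   level j is the interval [k * width, (k + 1) * width) for k = level_positions h0 r s m ! j.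
   The positions are a permutation of [0..<height] (level_positions_permutation), so the
   column tiles [0, height * width). *)

fun cut_width :: "real \<Rightarrow> (nat \<Rightarrow> nat) \<Rightarrow> nat \<Rightarrow> real" where
  "cut_width w0 r 0 = w0"
| "cut_width w0 r (Suc m) = cut_width w0 r m / real (r (Suc m) + 1)"

definition subcolumn_positions :: "nat list \<Rightarrow> nat \<Rightarrow> (nat \<Rightarrow> nat) \<Rightarrow> nat \<Rightarrow> nat list" where
  "subcolumn_positions ps rr ss i =
     map (\<lambda>k. k * (rr + 1) + i) ps @
     map (\<lambda>t. length ps * (rr + 1) + (\<Sum>i'<i. ss i') + t) [0..<ss i]"

fun level_positions :: "nat \<Rightarrow> (nat \<Rightarrow> nat) \<Rightarrow> (nat \<Rightarrow> nat \<Rightarrow> nat) \<Rightarrow> nat \<Rightarrow> nat list" where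
  "level_positions h0 r s 0 = [0..<h0]"
| "level_positions h0 r s (Suc m) =
     concat (map (subcolumn_positions (level_positions h0 r s m) (r (Suc m)) (s (Suc m)))
       [0..<Suc (r (Suc m))])"

lemma length_concat_map_upt: "length (concat (map f [0..<n])) = (\<Sum>i<n. length (f i))"
  by (induction n) auto

lemma nth_concat_map_upt:
  "i < n \<Longrightarrow> p < length (f i) \<Longrightarrow>
   concat (map f [0..<n]) ! ((\<Sum>i'<i. length (f i')) + p) = f i ! p"
proof (induction n)
  case (Suc n)
  show ?case
  proof (cases "i < n")
    case True
    have "(\<Sum>i'<i. length (f i')) + p < (\<Sum>i'<Suc i. length (f i'))"
      using Suc.prems by simp
    also have "\<dots> \<le> (\<Sum>i'<n. length (f i'))"
      by (rule sum_mono2) (use True in auto)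
    finally show ?thesis
      using Suc.IH[OF True Suc.prems(2)] by (simp add: nth_append length_concat_map_upt)
  next
    case False
    then have "i = n"
      using Suc.prems by simp
    then show ?thesis
      using Suc.prems by (simp add: nth_append length_concat_map_upt)
  qed
qed simp

lemma length_subcolumn_positions[simp]:
  "length (subcolumn_positions ps rr ss i) = length ps + ss i"
  by (simp add: subcolumn_positions_def)

lemma length_level_positions_Suc:
  "length (level_positions h0 r s (Suc m))
     = (r (Suc m) + 1) * length (level_positions h0 r s m) + (\<Sum>i\<le>r (Suc m). s (Suc m) i)"
  by (simp add: length_concat_map_upt sum.distrib flip: lessThan_Suc_atMost)

lemma nth_level_positions_Suc:
  assumes "i \<le> r (Suc m)" "p < length (level_positions h0 r s m)"
  shows "level_positions h0 r s (Suc m) !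
           ((\<Sum>i'<i. length (level_positions h0 r s m) + s (Suc m) i') + p)
         = level_positions h0 r s m ! p * (r (Suc m) + 1) + i"
    and "(\<Sum>i'<i. length (level_positions h0 r s m) + s (Suc m) i') + p
         < length (level_positions h0 r s (Suc m))"
proof -
  let ?f = "subcolumn_positions (level_positions h0 r s m) (r (Suc m)) (s (Suc m))"
  let ?l = "\<lambda>i'. length (level_positions h0 r s m) + s (Suc m) i'"
  have "level_positions h0 r s (Suc m) ! ((\<Sum>i'<i. length (?f i')) + p) = ?f i ! p"
    unfolding level_positions.simps by (rule nth_concat_map_upt) (use assms in auto)
  then show "level_positions h0 r s (Suc m) ! ((\<Sum>i'<i. ?l i') + p)
      = level_positions h0 r s m ! p * (r (Suc m) + 1) + i"
    using assms by (simp add: subcolumn_positions_def nth_append)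
  have "(\<Sum>i'<i. ?l i') + p < (\<Sum>i'<Suc i. ?l i')"
    using assms by simp
  also have "\<dots> \<le> (\<Sum>i'<Suc (r (Suc m)). ?l i')"
    by (rule sum_mono2) (use assms in auto)
  finally show "(\<Sum>i'<i. ?l i') + p < length (level_positions h0 r s (Suc m))"
    by (simp add: length_concat_map_upt)
qed

lemma distinct_subcolumn_positions:
  assumes ps: "set ps = {..<length ps}" "distinct ps" and n: "n \<le> Suc rr"
  shows "distinct (concat (map (subcolumn_positions ps rr ss) [0..<n])) \<and>
    set (concat (map (subcolumn_positions ps rr ss) [0..<n])) \<subseteq>
      {x. x < length ps * (rr + 1) \<and> x mod (rr + 1) < n} \<union>
      {x. length ps * (rr + 1) \<le> x \<and> x < length ps * (rr + 1) + (\<Sum>i<n. ss i)}"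
  using n
proof (induction n)
  case (Suc n)
  let ?h = "length ps" and ?R = "rr + 1"
  let ?old = "map (\<lambda>k. k * ?R + n) ps"
    and ?new = "map (\<lambda>t. ?h * ?R + (\<Sum>i'<n. ss i') + t) [0..<ss n]"
  have n: "n < ?R"
    using Suc.prems by simp
  have old: "k * ?R + n < ?h * ?R \<and> (k * ?R + n) mod ?R = n" if "k \<in> set ps" for k
  proof -
    have "k < ?h"
      using that ps(1) by auto
    then have "k * ?R + ?R \<le> ?h * ?R"
      by (metis add.commute mult_Suc mult_le_mono1 Suc_leI)
    moreover have "(k * ?R + n) mod ?R = n"
      using n by (simp only: mod_mult_self3 mod_less)
    ultimately show ?thesis
      using n by simp
  qed
  have block: "set (subcolumn_positions ps rr ss n) \<subseteq>
      {x. x < ?h * ?R \<and> x mod ?R = n} \<union>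
      {x. ?h * ?R + (\<Sum>i<n. ss i) \<le> x \<and> x < ?h * ?R + (\<Sum>i<Suc n. ss i)}"
    using old by (auto simp: subcolumn_positions_def)
  have "inj_on (\<lambda>k. k * ?R + n) (set ps)"
    by (rule inj_onI) (metis add_right_cancel mult_right_cancel add_is_0 one_neq_zero)
  then have "distinct ?old"
    using ps(2) by (simp add: distinct_map)
  moreover have "distinct ?new"
    by (simp add: distinct_map)
  moreover have "set ?old \<inter> set ?new = {}"
    using old by force
  ultimately have "distinct (subcolumn_positions ps rr ss n)"
    by (simp add: subcolumn_positions_def)
  with Suc block show ?case
    by (fastforce simp: set_eq_iff)
qed simp

lemma level_positions_permutation:
  "set (level_positions h0 r s m) = {..<length (level_positions h0 r s m)} \<and>
   distinct (level_positions h0 r s m)"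
proof (induction m)
  case (Suc m)
  let ?ps = "level_positions h0 r s m" and ?rr = "r (Suc m)" and ?ss = "s (Suc m)"
  let ?ps' = "level_positions h0 r s (Suc m)"
  have D: "distinct ?ps' \<and> set ?ps' \<subseteq>
      {x. x < length ?ps * (?rr + 1) \<and> x mod (?rr + 1) < Suc ?rr} \<union>
      {x. length ?ps * (?rr + 1) \<le> x \<and> x < length ?ps * (?rr + 1) + (\<Sum>i<Suc ?rr. ?ss i)}"
    unfolding level_positions.simps by (rule distinct_subcolumn_positions) (use Suc in auto)
  have "length ?ps' = length ?ps * (?rr + 1) + (\<Sum>i<Suc ?rr. ?ss i)"
    by (simp add: length_concat_map_upt sum.distrib)
  then have "set ?ps' \<subseteq> {..<length ?ps'}"
    using D by auto
  moreover have "card (set ?ps') = card {..<length ?ps'}"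
    unfolding card_lessThan using distinct_card D by blast
  ultimately have "set ?ps' = {..<length ?ps'}"
    using card_subset_eq[of "{..<length ?ps'}"] by simp
  with D show ?case
    by simp
qed auto

lemma cs_col_eq:
  "cs_col h0 w0 r s m =
     (map (\<lambda>k. real k * cut_width w0 r m) (level_positions h0 r s m), cut_width w0 r m,
      real (length (level_positions h0 r s m)) * cut_width w0 r m)"
proof (induction m)
  case (Suc m)
  let ?ps = "level_positions h0 r s m" and ?rr = "r (Suc m)" and ?ss = "s (Suc m)"
  let ?w = "cut_width w0 r m"
  let ?w' = "?w / real (?rr + 1)"
  have R: "real (?rr + 1) \<noteq> 0"
    by simp
  have subcolumns: "(\<lambda>i. map (\<lambda>a. a + real i * ?w') (map (\<lambda>k. real k * ?w) ?ps) @
        map (\<lambda>k. real (length ?ps) * ?w + real ((\<Sum>i'<i. ?ss i') + k) * ?w') [0..<?ss i])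
      = (\<lambda>i. map (\<lambda>k. real k * ?w') (subcolumn_positions ?ps ?rr ?ss i))"
    using R by (intro ext) (simp add: subcolumn_positions_def field_simps)
  have length: "real (length ?ps) * ?w + real (\<Sum>i\<le>?rr. ?ss i) * ?w' =
      real (length (level_positions h0 r s (Suc m))) * ?w'"
    unfolding length_level_positions_Suc using R by (simp add: field_simps)
  show ?case
    unfolding cs_col.simps Suc cs_step_def Let_def prod.case subcolumns length
    by (simp add: map_concat comp_def del: upt_Suc)
qed (simp add: cs_init_def)

declare level_positions.simps(2)[simp del]

locale cut_and_stack =
  fixes h0 :: nat and w0 :: real and r :: "nat \<Rightarrow> nat" and s :: "nat \<Rightarrow> nat \<Rightarrow> nat"
  assumes w0_pos: "w0 > 0" and cuts_pos: "\<forall>n\<ge>1. r n \<ge> 1"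
begin

abbreviation pos where "pos m \<equiv> level_positions h0 r s m"
abbreviation w where "w m \<equiv> cut_width w0 r m"
abbreviation h where "h m \<equiv> length (pos m)"
abbreviation L where "L m \<equiv> real (h m) * w m"

definition level :: "nat \<Rightarrow> nat \<Rightarrow> real set" where
  "level m j = {real (pos m ! j) * w m ..< real (pos m ! j) * w m + w m}"

(* Index in column Suc m of the bottom level of the copy of subcolumn i. *)
definition offset :: "nat \<Rightarrow> nat \<Rightarrow> nat" where
  "offset m i = (\<Sum>i'<i. h m + s (Suc m) i')"

definition shift :: "nat \<Rightarrow> nat \<Rightarrow> real" where
  "shift m j = (real (pos m ! Suc j) - real (pos m ! j)) * w m"

lemma w_pos: "w m > 0"
  by (induction m) (auto simp: w0_pos)

lemma cs_lefts_eq: "cs_lefts h0 w0 r s m = map (\<lambda>k. real k * w m) (pos m)"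
  by (simp add: cs_lefts_def cs_col_eq)

lemma cs_width_eq: "cs_width h0 w0 r s m = w m"
  by (simp add: cs_width_def cs_col_eq)

lemma cs_level_eq: "j < h m \<Longrightarrow> cs_level h0 w0 r s m j = level m j"
  by (simp add: cs_level_def cs_lefts_eq cs_width_eq level_def)

lemma mem_level_iff: "x \<in> level m j \<longleftrightarrow> 0 \<le> x \<and> nat \<lfloor>x / w m\<rfloor> = pos m ! j"
proof -
  have w: "w m > 0"
    by (rule w_pos)
  have "x \<in> level m j \<longleftrightarrow> real (pos m ! j) \<le> x / w m \<and> x / w m < real (pos m ! j) + 1"
    using w unfolding level_def by (auto simp: field_simps)
  also have "\<dots> \<longleftrightarrow> \<lfloor>x / w m\<rfloor> = int (pos m ! j)"
    by (simp add: floor_eq_iff)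
  also have "\<dots> \<longleftrightarrow> 0 \<le> x \<and> nat \<lfloor>x / w m\<rfloor> = pos m ! j"
  proof
    assume floor: "\<lfloor>x / w m\<rfloor> = int (pos m ! j)"
    then have "0 \<le> x / w m"
      by linarith
    then show "0 \<le> x \<and> nat \<lfloor>x / w m\<rfloor> = pos m ! j"
      using w floor by (simp add: zero_le_divide_iff)
  next
    assume "0 \<le> x \<and> nat \<lfloor>x / w m\<rfloor> = pos m ! j"
    moreover from this have "0 \<le> \<lfloor>x / w m\<rfloor>"
      using w by simp
    ultimately show "\<lfloor>x / w m\<rfloor> = int (pos m ! j)"
      by (metis nat_0_le)
  qed
  finally show ?thesis .
qed

lemma level_unique:
  assumes "j < h m" "j' < h m" "x \<in> level m j" "x \<in> level m j'"
  shows "j = j'"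
proof -
  have "pos m ! j = pos m ! j'"
    using assms(3,4) by (simp add: mem_level_iff)
  then show ?thesis
    using level_positions_permutation[of h0 r s m] assms(1,2) nth_eq_iff_index_eq by blast
qed

lemma column_eq_interval: "(\<Union>j<h m. level m j) = {0..<L m}"
proof -
  have column: "x \<in> (\<Union>j<h m. level m j) \<longleftrightarrow> 0 \<le> x \<and> nat \<lfloor>x / w m\<rfloor> < h m" for x
  proof
    assume "x \<in> (\<Union>j<h m. level m j)"
    then obtain j where "j < h m" "x \<in> level m j"
      by blast
    then show "0 \<le> x \<and> nat \<lfloor>x / w m\<rfloor> < h m"
      using level_positions_permutation[of h0 r s m] nth_mem[of j "pos m"]
      by (auto simp: mem_level_iff)
  next
    assume x: "0 \<le> x \<and> nat \<lfloor>x / w m\<rfloor> < h m"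
    then have "nat \<lfloor>x / w m\<rfloor> \<in> set (pos m)"
      using level_positions_permutation[of h0 r s m] by simp
    then obtain j where "j < h m" "pos m ! j = nat \<lfloor>x / w m\<rfloor>"
      by (auto simp: in_set_conv_nth)
    then show "x \<in> (\<Union>j<h m. level m j)"
      using x mem_level_iff[of x m j] by auto
  qed
  have height: "nat \<lfloor>x / w m\<rfloor> < h m \<longleftrightarrow> x < L m" if "0 \<le> x" for x
    using w_pos[of m] that by (simp add: nat_less_iff floor_less_iff divide_less_eq)
  show ?thesis
  proof (rule set_eqI)
    show "x \<in> (\<Union>j<h m. level m j) \<longleftrightarrow> x \<in> {0..<L m}" for x
      unfolding column using height[of x] by auto
  qed
qed

lemma L_le_Suc: "L m \<le> L (Suc m)"
proof -
  have "L (Suc m) = L m + real (\<Sum>i\<le>r (Suc m). s (Suc m) i) * w (Suc m)"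
    by (simp add: length_level_positions_Suc field_simps)
  moreover have "0 \<le> real (\<Sum>i\<le>r (Suc m). s (Suc m) i) * w (Suc m)"
    using w_pos[of "Suc m"] by (intro mult_nonneg_nonneg) (simp_all add: sum_nonneg)
  ultimately show ?thesis
    by linarith
qed

lemma L_mono: "m \<le> m' \<Longrightarrow> L m \<le> L m'"
  by (induction m' rule: dec_induct) (use L_le_Suc order_trans in blast)+

lemma level_refine:
  assumes j: "j < h m" and x: "x \<in> level m j"
  shows "\<exists>i\<le>r (Suc m). x \<in> level (Suc m) (offset m i + j) \<and>
           (\<forall>p<h m. offset m i + p < h (Suc m) \<and>
              pos (Suc m) ! (offset m i + p) = pos m ! p * (r (Suc m) + 1) + i)"
proof -
  let ?R = "r (Suc m) + 1" and ?k = "pos m ! j"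
  define w' where "w' = w m / real ?R"
  have R: "real ?R > 0" and w': "w' > 0" "real ?R * w' = w m" "w (Suc m) = w'"
    using w_pos[of m] by (simp_all add: w'_def)
  define i where "i = nat \<lfloor>(x - real ?k * w m) / w'\<rfloor>"
  have x1: "real ?k * w m \<le> x" "x < real ?k * w m + w m"
    using x by (auto simp: level_def)
  then have y0: "0 \<le> (x - real ?k * w m) / w'"
    using w' by auto
  have "(x - real ?k * w m) / w' < real ?R"
    using x1 w' by (simp add: pos_divide_less_eq)
  then have i_less: "i < ?R"
    unfolding i_def using y0 by (simp add: nat_less_iff floor_less_iff)
  have "real i \<le> (x - real ?k * w m) / w'" "(x - real ?k * w m) / w' < real i + 1"
    unfolding i_def using y0 by linarith+
  then have i_bounds: "real i * w' \<le> x - real ?k * w m" "x - real ?k * w m < real i * w' + w'"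
    using w' by (auto simp: field_simps)
  have nth: "\<forall>p<h m. offset m i + p < h (Suc m) \<and> pos (Suc m) ! (offset m i + p) = pos m ! p * ?R + i"
    using nth_level_positions_Suc[of i r m _ h0 s] i_less unfolding offset_def by auto
  have "real (?k * ?R + i) * w' = real ?k * w m + real i * w'"
    using R by (simp add: w'_def field_simps)
  then have "x \<in> level (Suc m) (offset m i + j)"
    using nth j i_bounds unfolding level_def w'(3) by auto
  moreover have "i \<le> r (Suc m)"
    using i_less by simp
  ultimately show ?thesis
    using nth by blast
qed

lemma shift_refine:
  assumes j: "Suc j < h m" and x: "x \<in> level m j"
  shows "\<exists>q. Suc q < h (Suc m) \<and> x \<in> level (Suc m) q \<and> shift (Suc m) q = shift m j"
proof -
  let ?R = "r (Suc m) + 1"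
  obtain i where i: "x \<in> level (Suc m) (offset m i + j)"
    and nth: "\<forall>p<h m. offset m i + p < h (Suc m) \<and>
      pos (Suc m) ! (offset m i + p) = pos m ! p * ?R + i"
    using level_refine[of j m x] j x by auto
  have "pos (Suc m) ! (offset m i + j) = pos m ! j * ?R + i"
    using nth j by auto
  moreover have "pos (Suc m) ! Suc (offset m i + j) = pos m ! Suc j * ?R + i"
    and q: "Suc (offset m i + j) < h (Suc m)"
    using nth j by (metis add_Suc_right)+
  ultimately have "shift (Suc m) (offset m i + j) = shift m j"
    unfolding shift_def by (simp add: field_simps)
  then show ?thesis
    using q i by blast
qed

lemma shift_propagate:
  assumes "Suc j < h m" "x \<in> level m j" "m \<le> m'"
  shows "\<exists>j'. Suc j' < h m' \<and> x \<in> level m' j' \<and> shift m' j' = shift m j"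
  using assms(3)
proof (induction m' rule: dec_induct)
  case (step n)
  then obtain j' where "Suc j' < h n" "x \<in> level n j'" "shift n j' = shift m j"
    by blast
  then show ?case
    using shift_refine by metis
qed (use assms in blast)

lemma cs_map_level:
  assumes j: "Suc j < h m" and x: "x \<in> level m j"
  shows "cs_map h0 w0 r s x = x + shift m j"
proof -
  let ?P = "\<lambda>m j. Suc j < length (cs_lefts h0 w0 r s m) \<and> x \<in> cs_level h0 w0 r s m j"
  have P_iff: "?P m' j' \<longleftrightarrow> Suc j' < h m' \<and> x \<in> level m' j'" for m' j'
    using cs_level_eq[of j' m'] by (auto simp: cs_lefts_eq)
  define m0 where "m0 = (LEAST m. \<exists>j. ?P m j)"
  have Pm: "\<exists>j. ?P m j"
    using j x P_iff by blast
  then have "\<exists>j. ?P m0 j"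
    unfolding m0_def by (rule LeastI)
  moreover have "m0 \<le> m"
    unfolding m0_def using Pm by (rule Least_le)
  ultimately obtain j0 where j0: "Suc j0 < h m0" "x \<in> level m0 j0"
    using P_iff by blast
  have the: "(THE j. ?P m0 j) = j0"
    using j0 level_unique[of _ m0 j0 x] by (intro the_equality) (auto simp: P_iff)
  obtain j' where j': "Suc j' < h m" "x \<in> level m j'" "shift m j' = shift m0 j0"
    using shift_propagate[OF j0 \<open>m0 \<le> m\<close>] by blast
  have "j' = j"
    using level_unique[of j' m j x] j' j x by simp
  have "cs_map h0 w0 r s x = x - cs_lefts h0 w0 r s m0 ! j0 + cs_lefts h0 w0 r s m0 ! Suc j0"
  proof -
    have "\<exists>m j. ?P m j"
      using Pm by blast
    then show ?thesis
      unfolding cs_map_def Let_def m0_def[symmetric] the by simp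
  qed
  also have "\<dots> = x + shift m0 j0"
    using j0 by (simp add: cs_lefts_eq shift_def algebra_simps)
  finally show ?thesis
    using j' \<open>j' = j\<close> by simp
qed

lemma cs_space_eq: "cs_space h0 w0 r s = (\<Union>m. {0..<L m})"
proof -
  have "(\<Union>j<length (cs_lefts h0 w0 r s m). cs_level h0 w0 r s m j) = {0..<L m}" for m
    using column_eq_interval[of m] cs_level_eq[of _ m] by (simp add: cs_lefts_eq)
  then show ?thesis
    unfolding cs_space_def by simp
qed

lemma level_shift: "x \<in> level m j \<Longrightarrow> x + shift m j \<in> level m (Suc j)"
  by (auto simp: level_def shift_def algebra_simps)

lemma level_subset_space: "j < h m \<Longrightarrow> level m j \<subseteq> cs_space h0 w0 r s"
  using column_eq_interval[of m] unfolding cs_space_eq by blast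

lemma cs_map_cases:
  "cs_map h0 w0 r s x = x \<or>
   (\<exists>m j. Suc j < h m \<and> x \<in> level m j \<and> cs_map h0 w0 r s x = x + shift m j)"
proof (cases "\<exists>m j. Suc j < length (cs_lefts h0 w0 r s m) \<and> x \<in> cs_level h0 w0 r s m j")
  case True
  then obtain m j where "Suc j < h m" "x \<in> level m j"
    using cs_level_eq by (auto simp: cs_lefts_eq)
  then show ?thesis
    using cs_map_level by blast
next
  case False
  then show ?thesis
    unfolding cs_map_def if_not_P[OF False] by simp
qed

lemma cs_map_space:
  assumes "x \<in> cs_space h0 w0 r s"
  shows "cs_map h0 w0 r s x \<in> cs_space h0 w0 r s"
  using cs_map_cases[of x] assms level_shift level_subset_space by fastforce

lemma countable_cs_map_vimage:
  assumes "countable E"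
  shows "countable {x. cs_map h0 w0 r s x \<in> E}"
proof (rule countable_subset)
  show "{x. cs_map h0 w0 r s x \<in> E} \<subseteq> E \<union> (\<Union>m j. (\<lambda>e. e - shift m j) ` E)"
  proof
    fix x
    assume "x \<in> {x. cs_map h0 w0 r s x \<in> E}"
    then show "x \<in> E \<union> (\<Union>m j. (\<lambda>e. e - shift m j) ` E)"
      using cs_map_cases[of x] by (auto simp: image_iff) (metis add_diff_cancel_right')
  qed
  show "countable (E \<union> (\<Union>m j. (\<lambda>e. e - shift m j) ` E))"
    using assms by auto
qed

lemma h_pos: "h0 \<ge> 1 \<Longrightarrow> h m \<ge> 1"
proof (induction m)
  case (Suc m)
  have "h m \<le> h (Suc m)"
    unfolding length_level_positions_Suc by simp
  then show ?case
    using Suc by simp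
qed simp

lemma in_column: "x \<in> {0..<L m} \<Longrightarrow> \<exists>j<h m. x \<in> level m j"
  using column_eq_interval[of m] by auto

lemma eventually_in_column:
  assumes "x \<in> cs_space h0 w0 r s"
  obtains m0 where "\<And>m. m \<ge> m0 \<Longrightarrow> \<exists>j<h m. x \<in> level m j"
proof -
  obtain m0 where "x \<in> {0..<L m0}"
    using assms unfolding cs_space_eq by blast
  then have "\<exists>j<h m. x \<in> level m j" if "m \<ge> m0" for m
    using L_mono[OF that] by (intro in_column) auto
  then show ?thesis
    using that by blast
qed

lemma w_le_half_power: "w m \<le> w0 * (1/2)^m"
proof (induction m)
  case (Suc m)
  have "real (r (Suc m) + 1) \<ge> 2"
    using cuts_pos by auto
  then have "w m / real (r (Suc m) + 1) \<le> w m / 2"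
    using w_pos[of m] by (intro divide_left_mono) auto
  then have "w (Suc m) \<le> w m / 2"
    by simp
  then show ?case
    using Suc by simp
qed simp

lemma w_eventually_less:
  assumes "\<epsilon> > 0"
  obtains m0 where "\<And>m. m \<ge> m0 \<Longrightarrow> w m < \<epsilon>"
proof -
  obtain m0 where "(1/2::real)^m0 < \<epsilon> / w0"
    using real_arch_pow_inv[of "\<epsilon> / w0" "1/2"] assms w0_pos by auto
  then have m0: "w0 * (1/2)^m0 < \<epsilon>"
    using w0_pos by (simp add: field_simps)
  have "w m < \<epsilon>" if "m \<ge> m0" for m
  proof -
    have "w m \<le> w0 * (1/2)^m"
      by (rule w_le_half_power)
    also have "\<dots> \<le> w0 * (1/2)^m0"
      using that w0_pos by (simp add: power_decreasing)
    finally show ?thesis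
      using m0 by simp
  qed
  then show ?thesis
    using that by blast
qed

definition non_top :: "real set" where
  "non_top = {x. \<exists>m j. Suc j < h m \<and> x \<in> level m j}"

lemma top_unique:
  assumes x: "x \<in> cs_space h0 w0 r s - non_top" and y: "y \<in> cs_space h0 w0 r s - non_top"
  shows "x = y"
proof (rule ccontr)
  assume "x \<noteq> y"
  obtain m1 where m1: "\<And>m. m \<ge> m1 \<Longrightarrow> \<exists>j<h m. x \<in> level m j"
    using x eventually_in_column by blast
  obtain m2 where m2: "\<And>m. m \<ge> m2 \<Longrightarrow> \<exists>j<h m. y \<in> level m j"
    using y eventually_in_column by blast
  obtain m3 where m3: "\<And>m. m \<ge> m3 \<Longrightarrow> w m < \<bar>x - y\<bar>"
    using w_eventually_less[of "\<bar>x - y\<bar>"] \<open>x \<noteq> y\<close> by auto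
  define m where "m = max (max m1 m2) m3"
  have m: "m1 \<le> m" "m2 \<le> m" "m3 \<le> m"
    unfolding m_def by auto
  obtain j where j: "j < h m" "x \<in> level m j"
    using m1[OF m(1)] by blast
  obtain j' where j': "j' < h m" "y \<in> level m j'"
    using m2[OF m(2)] by blast
  have "\<not> Suc j < h m" "\<not> Suc j' < h m"
    using x y j j' unfolding non_top_def by blast+
  then have "j = j'"
    using j j' by simp
  then have "\<bar>x - y\<bar> < w m"
    using j j' unfolding level_def by auto
  moreover have "w m < \<bar>x - y\<bar>"
    using m3[OF m(3)] .
  ultimately show False by simp
qed

lemma countable_top: "countable (cs_space h0 w0 r s - non_top)"
proof (cases "cs_space h0 w0 r s - non_top = {}")
  case False
  then obtain a where "a \<in> cs_space h0 w0 r s - non_top"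
    by blast
  then have "cs_space h0 w0 r s - non_top \<subseteq> {a}"
    using top_unique by blast
  then show ?thesis
    by (rule countable_subset) simp
qed (metis countable_empty)

definition never_top :: "real set" where
  "never_top = {x \<in> cs_space h0 w0 r s. \<forall>n. (cs_map h0 w0 r s ^^ n) x \<in> non_top}"

lemma never_top_subset: "never_top \<subseteq> cs_space h0 w0 r s" "never_top \<subseteq> non_top"
  unfolding never_top_def by (auto dest: spec[of _ 0])

lemma cs_map_never_top: "cs_map h0 w0 r s ` never_top \<subseteq> never_top"
proof (rule image_subsetI)
  fix x
  assume x: "x \<in> never_top"
  have "(cs_map h0 w0 r s ^^ n) (cs_map h0 w0 r s x) \<in> non_top" for n
  proof -
    have "(cs_map h0 w0 r s ^^ Suc n) x \<in> non_top"
      using x unfolding never_top_def by blast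
    then show ?thesis
      by (simp only: funpow_Suc_right comp_apply)
  qed
  moreover have "cs_map h0 w0 r s x \<in> cs_space h0 w0 r s"
    using x never_top_subset(1) cs_map_space by blast
  ultimately show "cs_map h0 w0 r s x \<in> never_top"
    unfolding never_top_def by blast
qed

lemma countable_space_diff_never_top: "countable (cs_space h0 w0 r s - never_top)"
proof -
  define E where "E n = {x \<in> cs_space h0 w0 r s. (cs_map h0 w0 r s ^^ n) x \<notin> non_top}" for n
  have "countable (E n)" for n
  proof (induction n)
    case 0
    show ?case
      using countable_top unfolding E_def by (simp add: set_diff_eq)
  next
    case (Suc n)
    have "E (Suc n) \<subseteq> {x. cs_map h0 w0 r s x \<in> E n}"
      unfolding E_def using cs_map_space by (auto simp del: funpow.simps simp: funpow_Suc_right)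
    then show ?case
      using countable_cs_map_vimage[OF Suc] by (rule countable_subset)
  qed
  moreover have "cs_space h0 w0 r s - never_top = (\<Union>n. E n)"
    unfolding never_top_def E_def by blast
  ultimately show ?thesis
    by simp
qed

end

locale eventually_constant_spacers =
  fixes r :: "nat \<Rightarrow> nat" and s :: "nat \<Rightarrow> nat \<Rightarrow> nat" and c M :: nat
  assumes cuts_pos: "\<forall>n\<ge>1. r n \<ge> 1"
    and spacers_eq: "\<forall>n>M. (\<forall>i<r n. s n i = c) \<and> s n (r n) = 0"
begin

sublocale rk: cut_and_stack 1 1 r s
  using cuts_pos by unfold_locales simp_all

(* The tower D_k of the proof idea: C_(M+1) with c spacers on top, cut and stacked without
   spacers. *)
sublocale od: cut_and_stack "rk.h M + c" "rk.w M" "\<lambda>n. r (M + n)" "\<lambda>n i. 0"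
  using cuts_pos rk.w_pos by unfold_locales auto

abbreviation X where "X \<equiv> cs_space 1 1 r s"
abbreviation T where "T \<equiv> cs_map 1 1 r s"
abbreviation S where "S \<equiv> cs_map (rk.h M + c) (rk.w M) (\<lambda>n. r (M + n)) (\<lambda>n i. 0)"

lemma od_w: "od.w k = rk.w (M + k)"
  by (induction k) auto

lemma sum_spacers: "(\<Sum>i\<le>r (Suc (M + k)). s (Suc (M + k)) i) = r (Suc (M + k)) * c"
proof -
  have "(\<Sum>i\<le>r (Suc (M + k)). s (Suc (M + k)) i)
      = (\<Sum>i<r (Suc (M + k)). s (Suc (M + k)) i) + s (Suc (M + k)) (r (Suc (M + k)))"
    by (simp add: lessThan_Suc_atMost[symmetric])
  also have "\<dots> = r (Suc (M + k)) * c"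
    using spacers_eq by simp
  finally show ?thesis .
qed

lemma od_h: "od.h k = rk.h (M + k) + c"
proof (induction k)
  case (Suc k)
  have "od.h (Suc k) = (r (Suc (M + k)) + 1) * (rk.h (M + k) + c)"
    using Suc by (simp add: length_level_positions_Suc)
  also have "\<dots> = rk.h (Suc (M + k)) + c"
    by (simp add: length_level_positions_Suc sum_spacers algebra_simps)
  finally show ?case by simp
qed simp

lemma offset_eq:
  assumes "i \<le> r (Suc (M + k))"
  shows "rk.offset (M + k) i = od.offset k i"
  using assms spacers_eq unfolding rk.offset_def od.offset_def od_h by simp

definition total_length :: real where
  "total_length = real (rk.h M + c) * rk.w M"

lemma od_L: "od.L k = total_length"
proof (induction k)
  case (Suc k)
  have "od.L (Suc k) = real ((r (M + Suc k) + 1) * od.h k) * (od.w k / real (r (M + Suc k) + 1))"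
    by (simp add: length_level_positions_Suc)
  also have "\<dots> = od.L k"
    by (simp add: field_simps)
  finally show ?case
    using Suc by simp
qed (simp add: total_length_def)

lemma rk_L: "rk.L (M + k) = total_length - real c * rk.w (M + k)"
proof -
  have "real (rk.h (M + k) + c) * rk.w (M + k) = total_length"
    using od_L[of k] by (simp only: od_h od_w)
  then show ?thesis
    by (simp add: distrib_right)
qed

lemma rk_space: "X = {0..<total_length}"
proof
  show "X \<subseteq> {0..<total_length}"
  proof
    fix x
    assume "x \<in> X"
    then obtain m where x: "x \<in> {0..<rk.L m}"
      unfolding rk.cs_space_eq by blast
    have "rk.L m \<le> rk.L (M + m)"
      by (rule rk.L_mono) simp
    also have "\<dots> \<le> total_length"
      using rk_L[of m] rk.w_pos[of "M + m"] by simp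
    finally show "x \<in> {0..<total_length}"
      using x by auto
  qed
  show "{0..<total_length} \<subseteq> X"
  proof
    fix x
    assume x: "x \<in> {0..<total_length}"
    have "\<exists>k. x < rk.L (M + k)"
    proof (cases "c = 0")
      case True
      then have "x < rk.L (M + 0)"
        using rk_L[of 0] x by simp
      then show ?thesis ..
    next
      case False
      then obtain m where "\<And>m'. m' \<ge> m \<Longrightarrow> rk.w m' < (total_length - x) / real c"
        using rk.w_eventually_less[of "(total_length - x) / real c"] x by auto
      then have "real c * rk.w (M + m) < total_length - x"
        using False by (simp add: field_simps)
      then show ?thesis
        using rk_L[of m] by (intro exI[of _ m]) linarith
    qed
    then show "x \<in> X"
      unfolding rk.cs_space_eq using x by auto
  qed
qed

lemma od_space: "cs_space (rk.h M + c) (rk.w M) (\<lambda>n. r (M + n)) (\<lambda>n i. 0) = {0..<total_length}"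
  unfolding od.cs_space_eq od_L by simp

definition delta :: "nat \<Rightarrow> nat \<Rightarrow> real" where
  "delta k j = (real (od.pos k ! j) - real (rk.pos (M + k) ! j)) * rk.w (M + k)"

lemma delta_refine:
  assumes j: "j < rk.h (M + k)" and x: "x \<in> rk.level (M + k) j"
  shows "\<exists>q<rk.h (M + Suc k). x \<in> rk.level (M + Suc k) q \<and> delta (Suc k) q = delta k j"
proof -
  let ?R = "r (Suc (M + k)) + 1"
  obtain i where i: "i \<le> r (Suc (M + k))" "x \<in> rk.level (Suc (M + k)) (rk.offset (M + k) i + j)"
    and rk_pos: "\<forall>p<rk.h (M + k). rk.offset (M + k) i + p < rk.h (Suc (M + k)) \<and>
       rk.pos (Suc (M + k)) ! (rk.offset (M + k) i + p) = rk.pos (M + k) ! p * ?R + i"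
    using rk.level_refine[OF j x] by blast
  have "od.pos (Suc k) ! ((\<Sum>i'<i. od.h k + 0) + j) = od.pos k ! j * (r (M + Suc k) + 1) + i"
    using nth_level_positions_Suc(1)[of i "\<lambda>n. r (M + n)" k j "rk.h M + c" "\<lambda>n i. 0"] i j od_h
    by simp
  moreover have "(\<Sum>i'<i. od.h k + 0) = rk.offset (M + k) i"
    using offset_eq[OF i(1)] unfolding od.offset_def by simp
  ultimately have "od.pos (Suc k) ! (rk.offset (M + k) i + j) = od.pos k ! j * ?R + i"
    by simp
  moreover have "rk.pos (Suc (M + k)) ! (rk.offset (M + k) i + j) = rk.pos (M + k) ! j * ?R + i"
    and q: "rk.offset (M + k) i + j < rk.h (Suc (M + k))"
    using rk_pos j by auto
  ultimately have "delta (Suc k) (rk.offset (M + k) i + j) = delta k j"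
    unfolding delta_def by (simp add: field_simps)
  then show ?thesis
    using q i(2) by (intro exI[of _ "rk.offset (M + k) i + j"]) simp
qed

lemma delta_propagate:
  assumes "k \<le> k'" "j < rk.h (M + k)" "x \<in> rk.level (M + k) j"
  shows "\<exists>q<rk.h (M + k'). x \<in> rk.level (M + k') q \<and> delta k' q = delta k j"
  using assms(1)
proof (induction k' rule: dec_induct)
  case (step n)
  then obtain q where "q < rk.h (M + n)" "x \<in> rk.level (M + n) q" "delta n q = delta k j"
    by blast
  then show ?case
    using delta_refine by fastforce
qed (use assms in blast)

lemma delta_unique:
  assumes "j < rk.h (M + k)" "x \<in> rk.level (M + k) j" "j' < rk.h (M + k')" "x \<in> rk.level (M + k') j'"
  shows "delta k j = delta k' j'"
proof -
  have le: "delta k j = delta k' j'" if kk: "k \<le> k'"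
    and j: "j < rk.h (M + k)" "x \<in> rk.level (M + k) j"
    and j': "j' < rk.h (M + k')" "x \<in> rk.level (M + k') j'"
    for k k' j j'
  proof -
    obtain q where q: "q < rk.h (M + k')" "x \<in> rk.level (M + k') q" "delta k' q = delta k j"
      using delta_propagate[OF kk j] by blast
    have "q = j'"
      using rk.level_unique[OF q(1) j'(1) q(2) j'(2)] .
    then show ?thesis
      using q(3) by simp
  qed
  show ?thesis
  proof (cases "k \<le> k'")
    case True
    then show ?thesis
      using le assms by blast
  next
    case False
    then show ?thesis
      using le[of k' k j' j] assms by simp
  qed
qed

(* Well defined on the columns by delta_unique; the value elsewhere is never used. *)
definition phi :: "real \<Rightarrow> real" where
  "phi x = x + (SOME d. \<exists>k j. j < rk.h (M + k) \<and> x \<in> rk.level (M + k) j \<and> d = delta k j)"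

lemma phi_eq:
  assumes "j < rk.h (M + k)" "x \<in> rk.level (M + k) j"
  shows "phi x = x + delta k j"
proof -
  define P where "P d \<longleftrightarrow> (\<exists>k j. j < rk.h (M + k) \<and> x \<in> rk.level (M + k) j \<and> d = delta k j)" for d
  have "P (delta k j)"
    unfolding P_def using assms by auto
  then have "P (Eps P)"
    by (rule someI)
  then obtain k' j' where "j' < rk.h (M + k')" "x \<in> rk.level (M + k') j'" "Eps P = delta k' j'"
    unfolding P_def by blast
  then have "Eps P = delta k j"
    using delta_unique[OF assms] by simp
  then show ?thesis
    unfolding phi_def P_def[abs_def] by simp
qed

lemma phi_level:
  assumes "j < rk.h (M + k)" "x \<in> rk.level (M + k) j"
  shows "j < od.h k" "phi x \<in> od.level k j"
proof -
  show "j < od.h k"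
    using assms od_h by simp
  have "phi x - real (od.pos k ! j) * rk.w (M + k) = x - real (rk.pos (M + k) ! j) * rk.w (M + k)"
    unfolding phi_eq[OF assms] delta_def by (simp add: algebra_simps)
  then show "phi x \<in> od.level k j"
    using assms(2) unfolding rk.level_def od.level_def od_w by auto
qed

lemma phi_inj: "inj_on phi X"
proof (rule inj_onI)
  fix x y
  assume x: "x \<in> X" and y: "y \<in> X" and eq: "phi x = phi y"
  obtain m1 where m1: "\<And>m. m \<ge> m1 \<Longrightarrow> \<exists>j<rk.h m. x \<in> rk.level m j"
    using rk.eventually_in_column[OF x] by blast
  obtain m2 where m2: "\<And>m. m \<ge> m2 \<Longrightarrow> \<exists>j<rk.h m. y \<in> rk.level m j"
    using rk.eventually_in_column[OF y] by blast
  define k where "k = m1 + m2"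
  obtain j where j: "j < rk.h (M + k)" "x \<in> rk.level (M + k) j"
    using m1[of "M + k"] unfolding k_def by auto
  obtain j' where j': "j' < rk.h (M + k)" "y \<in> rk.level (M + k) j'"
    using m2[of "M + k"] unfolding k_def by auto
  have "j = j'"
    using phi_level[OF j] phi_level[OF j'] eq od.level_unique by metis
  then show "x = y"
    using eq phi_eq[OF j] phi_eq[OF j'] by simp
qed

lemma phi_space: "phi ` X \<subseteq> {0..<total_length}"
proof
  fix y
  assume "y \<in> phi ` X"
  then obtain x where x: "x \<in> X" "y = phi x"
    by blast
  then obtain m0 where "\<And>m. m \<ge> m0 \<Longrightarrow> \<exists>j<rk.h m. x \<in> rk.level m j"
    using rk.eventually_in_column by blast
  then obtain j where "j < rk.h (M + m0)" "x \<in> rk.level (M + m0) j"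
    by (meson le_add2)
  then have "phi x \<in> cs_space (rk.h M + c) (rk.w M) (\<lambda>n. r (M + n)) (\<lambda>n i. 0)"
    using phi_level od.level_subset_space by blast
  then show "y \<in> {0..<total_length}"
    using x od_space by simp
qed

lemma phi_conj:
  assumes "x \<in> rk.non_top"
  shows "phi (T x) = S (phi x)"
proof -
  obtain m j where "Suc j < rk.h m" "x \<in> rk.level m j"
    using assms unfolding rk.non_top_def by blast
  then obtain j where j: "Suc j < rk.h (M + m)" "x \<in> rk.level (M + m) j"
    using rk.shift_propagate[of j m x "M + m"] by auto
  have Tx_eq: "T x = x + rk.shift (M + m) j"
    by (rule rk.cs_map_level[OF j])
  have Sx: "S (phi x) = phi x + od.shift m j"
    using phi_level[of j m x] j od_h by (intro od.cs_map_level) auto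
  have Tx: "phi (T x) = T x + delta m (Suc j)"
    unfolding Tx_eq using rk.level_shift[OF j(2)] j(1) by (intro phi_eq) auto
  have px: "phi x = x + delta m j"
    using j by (intro phi_eq) auto
  have "T x + delta m (Suc j) = phi x + od.shift m j"
    unfolding Tx_eq px rk.shift_def od.shift_def delta_def od_w by (simp add: algebra_simps)
  then show ?thesis
    using Sx Tx by simp
qed

lemma is_odometer_rank_one: "is_odometer (cs_measure 1 1 r s) T"
proof -
  define P where "P = (\<lambda>(k, j). if j < rk.h (M + k) then rk.level (M + k) j else {})"
  have "mp_isomorphic (restrict_space lborel {0..<total_length}) T
      (restrict_space lborel {0..<total_length}) S"
  proof (rule mp_isomorphic_piecewise_translation[where P=P and t="\<lambda>(k, j). delta k j" and f=phi])
    show "emeasure lborel {0..<total_length} \<noteq> \<infinity>"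
      using rk.w_pos[of M] by (simp add: total_length_def)
    show "rk.never_top \<subseteq> {0..<total_length}"
      using rk.never_top_subset(1) rk_space by simp
    show "countable ({0..<total_length} - rk.never_top)"
      using rk.countable_space_diff_never_top rk_space by simp
    show "rk.never_top \<subseteq> (\<Union>i. P i)"
    proof
      fix x
      assume "x \<in> rk.never_top"
      then obtain m0 where "\<And>m. m \<ge> m0 \<Longrightarrow> \<exists>j<rk.h m. x \<in> rk.level m j"
        using rk.eventually_in_column rk.never_top_subset(1) by blast
      then obtain j where "j < rk.h (M + m0)" "x \<in> rk.level (M + m0) j"
        by (meson le_add2)
      then have "x \<in> P (m0, j)"
        unfolding P_def by simp
      then show "x \<in> (\<Union>i. P i)"
        by blast
    qed
    show "P i \<in> sets borel" for i
      unfolding P_def rk.level_def by (auto split: prod.split)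
    show "\<forall>i. \<forall>x\<in>P i. phi x = x + (case i of (k, j) \<Rightarrow> delta k j)"
      unfolding P_def using phi_eq by (auto split: if_splits)
    show "inj_on phi rk.never_top"
      using phi_inj rk.never_top_subset(1) by (rule inj_on_subset)
    show "phi ` rk.never_top \<subseteq> {0..<total_length}"
      using phi_space rk.never_top_subset(1) by blast
    show "T ` rk.never_top \<subseteq> rk.never_top"
      by (rule rk.cs_map_never_top)
    show "phi (T x) = S (phi x)" if "x \<in> rk.never_top" for x
      using that rk.never_top_subset(2) phi_conj by blast
  qed simp_all
  moreover have "cs_measure 1 1 r s = restrict_space lborel {0..<total_length}"
    unfolding cs_measure_def rk_space ..
  moreover have "cs_measure (rk.h M + c) (rk.w M) (\<lambda>n. r (M + n)) (\<lambda>n i. 0)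
      = restrict_space lborel {0..<total_length}"
    unfolding cs_measure_def od_space ..
  ultimately show ?thesis
    unfolding is_odometer_def using rk.h_pos[of M] rk.w_pos[of M] cuts_pos
    by (intro exI[of _ "rk.h M + c"] exI[of _ "rk.w M"] exI[of _ "\<lambda>n. r (M + n)"]
        exI[of _ "\<lambda>n i. 0"] exI[of _ 0]) auto
qed

end

theorem proposition2:
  fixes r :: "nat \<Rightarrow> nat" and s :: "nat \<Rightarrow> nat \<Rightarrow> nat" and c :: nat
  assumes "\<forall>n\<ge>1. r n \<ge> 1"
    and "\<exists>N. \<forall>n\<ge>N. (\<forall>i<r n. s n i = c) \<and> s n (r n) = 0"
  shows "is_odometer (rank_one_measure r s) (rank_one_map r s)"
proof -
  obtain N where "\<forall>n\<ge>N. (\<forall>i<r n. s n i = c) \<and> s n (r n) = 0"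
    using assms(2) by blast
  then interpret eventually_constant_spacers r s c N
    using assms(1) by unfold_locales auto
  show ?thesis
    unfolding rank_one_measure_def rank_one_map_def by (rule is_odometer_rank_one)
qed

end
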